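(* Let $p$ be a well-typed Molholes program. Then for every input stream $is=(i_0,i_1,\dots)$ of lists compatible with $\mathsf{inputs}\,p$ (i.e. each $i_j$ is a list whose $n$-th entry is a value of the $n$-th type of $\mathsf{inputs}\,p$), the stream $\mathrm{run}\,p\,(\mathrm{init}\,p)\,is$ is everywhere defined and is a stream $os$ of lists compatible with $\mathsf{outputs}\,p$.
   Context: Host language: types are sets, functions total; products; $\mathsf{Unit}=\{tt\}$. A resource of type $A$ is $\mathsf{Ref}\,A\,n$, $\mathrm{id}=n$. Molholes terms: $\mathsf{Arr}\,f:\mathsf{RSF}\,A\,B$, $\mathsf{Comp}\,t_1\,t_2:\mathsf{RSF}\,A\,C$ ($t_1:\mathsf{RSF}\,A\,B$, $t_2:\mathsf{RSF}\,B\,C$), $\mathsf{First}\,t:\mathsf{RSF}(A\times C)(B\times C)$, $\mathsf{Get}\,r:\mathsf{RSF}\,A(A\times B)$, $\mathsf{Set}\,r:\mathsf{RSF}(A\times B)A$ ($r$ of type $B$). A status is $\mathsf{Internal}$, $\mathsf{Input}\,b$ or $\mathsf{Output}\,b$; a cell is $\mathsf{Cell}(s,\tau)\,x$ with $x$ a value of $\tau$ or $\mathsf{undef}$; a memory is a partial map $\mathbb N\rightharpoonup$ cells. For $r=\mathsf{Ref}\,A\,n$: $\mathrm{read}\,r\,\sigma=(x,\sigma)$ if $\sigma n=\mathsf{Cell}(\mathsf{Internal},A)x$; $=(x,\sigma[n\mapsto\mathsf{Cell}(\mathsf{Input}\,\mathrm{false},A)\mathsf{undef}])$ if $\sigma n=\mathsf{Cell}(\mathsf{Input}\,\mathrm{true},A)x$;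 else undefined. $\mathrm{write}\,r\,\sigma\,v=\sigma[n\mapsto\mathsf{Cell}(\mathsf{Internal},A)v]$ if $\sigma n=\mathsf{Cell}(\mathsf{Internal},A)x$; $=\sigma[n\mapsto\mathsf{Cell}(\mathsf{Output}\,\mathrm{false},A)v]$ if $\sigma n=\mathsf{Cell}(\mathsf{Output}\,\mathrm{true},A)\mathsf{undef}$; else undefined. Semantics $\mathrm{step}\,t:A\to(\text{memory}\rightharpoonup B\times\text{memory})$: $\mathsf{Arr}\,f\mapsto\lambda x\sigma.(fx,\sigma)$; $\mathsf{Comp}\,t_1t_2\mapsto\lambda x\sigma.\mathrm{step}\,t_2\,y\,\sigma'$ with $(y,\sigma')=\mathrm{step}\,t_1\,x\,\sigma$; $\mathsf{First}\,t\mapsto\lambda(x,c)\sigma.((y,c),\sigma')$ with $(y,\sigma')=\mathrm{step}\,t\,x\,\sigma$; $\mathsf{Get}\,r\mapsto\lambda x\sigma.((x,y),\sigma')$ with $(y,\sigma')=\mathrm{read}\,r\,\sigma$; $\mathsf{Set}\,r\mapsto\lambda(x,y)\sigma.(x,\mathrm{write}\,r\,\sigma\,y)$ (all partial). A program $p$ consists of a list $\mathsf{inputs}\,p$ of $k_{in}$ types, a list $\mathsf{internals}\,p$ of $k$ typed values, a list $\mathsf{outputs}\,p$ of $k_{out}$ types, and $\mathsf{program}\,p:\mathsf{RSF}\,\mathsf{Unit}\,\mathsf{Unit}$; input resources have identifiers $0,\dots,k_{in}-1$, internal ones $k_{in},\dots,k_{in}+k-1$, output ones $k_{in}+k,\dots,k_{in}+k+k_{out}-1$,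 with the corresponding types. $\mathrm{init}\,p$ maps internal index $n$ to $\mathsf{Cell}(\mathsf{Internal},\tau)\,v$ where $v:\tau$ is the corresponding entry of $\mathsf{internals}\,p$, undefined elsewhere. $\mathrm{pull}\,p\,\sigma\,i$ maps input index $n$ to $\mathsf{Cell}(\mathsf{Input}\,\mathrm{true},\tau_n)\,i_n$, output index $n$ to $\mathsf{Cell}(\mathsf{Output}\,\mathrm{true},\tau)\,\mathsf{undef}$, and agrees with $\sigma$ elsewhere. $\mathrm{push}\,p\,\sigma$ is the list, in index order, of values $v$ with $\sigma\,n=\mathsf{Cell}(\mathsf{Output}\,\mathrm{false},\tau)\,v$ for output indices $n$. Corecursively, $\mathrm{run}\,p\,\sigma\,(i:is)=(\mathrm{push}\,p\,\sigma'):\mathrm{run}\,p\,\sigma'\,is$ where $(tt,\sigma')=\mathrm{step}(\mathsf{program}\,p)\,tt\,(\mathrm{pull}\,p\,\sigma\,i)$ (undefined if this step is undefined). Well-typedness: an abstract memory $\Sigma$ maps indices to pairs (status, type). For $r=\mathsf{Ref}\,A\,n$: $\mathrm{read}^\dagger r\Sigma=\Sigma$ if $\Sigma n=(\mathsf{Internal},A)$, $=\Sigma[n\mapsto(\mathsf{Input}\,\mathrm{false},A)]$ if $\Sigma n=(\mathsf{Input}\,\mathrm{true},A)$, else undefined; $\mathrm{write}^\dagger r\Sigma=\Sigma$ if $\Sigma n=(\mathsf{Internal},A)$, $=\Sigma[n\mapsto(\mathsf{Output}\,\mathrm{false},A)]$ if $\Sigma n=(\mathsf{Output}\,\mathrm{true},A)$,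 else undefined. $\mathrm{step}^\dagger(\mathsf{Arr}\,f)\Sigma=\Sigma$; $\mathrm{step}^\dagger(\mathsf{First}\,t)=\mathrm{step}^\dagger t$; $\mathrm{step}^\dagger(\mathsf{Comp}\,t_1t_2)\Sigma=\mathrm{step}^\dagger t_2(\mathrm{step}^\dagger t_1\Sigma)$; $\mathrm{step}^\dagger(\mathsf{Get}\,r)=\mathrm{read}^\dagger r$; $\mathrm{step}^\dagger(\mathsf{Set}\,r)=\mathrm{write}^\dagger r$ (partial). $\mathrm{init}^\dagger p$ assigns $(\mathsf{Input}\,\mathrm{true},\tau)$ to input indices, $(\mathsf{Output}\,\mathrm{true},\tau)$ to output indices and $(\mathsf{Internal},\tau)$ to internal indices (with the corresponding types), undefined elsewhere. $p$ is well-typed if $\mathrm{step}^\dagger(\mathsf{program}\,p)(\mathrm{init}^\dagger p)$ is defined and assigns status $\mathsf{Input}\,\mathrm{false}$ to every input index and $\mathsf{Output}\,\mathrm{false}$ to every output index. *)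

theory Defs
  imports Main
begin

text \<open>Host-language values: a universe closed under the unit value and pairing,
  over an arbitrary type of atoms. Host types are sets of values.\<close>

datatype 'a val = VUnit | VPair "'a val" "'a val" | VAtom 'a

type_synonym 'a ty = "'a val set"

definition UnitT :: "'a ty" where
  "UnitT = {VUnit}"

definition ProdT :: "'a ty \<Rightarrow> 'a ty \<Rightarrow> 'a ty" where
  "ProdT A B = {VPair x y | x y. x \<in> A \<and> y \<in> B}"

datatype 'a resource = Ref "'a ty" nat

datatype 'a rsf =
    Arr "'a val \<Rightarrow> 'a val"
  | Comp "'a rsf" "'a rsf"
  | First "'a rsf"
  | Get "'a resource"
  | Set "'a resource"

text \<open>Typing of terms: \<open>wt_rsf t A B\<close> means \<open>t : RSF A B\<close>.\<close>

inductive wt_rsf :: "'a rsf \<Rightarrow> 'a ty \<Rightarrow> 'a ty \<Rightarrow> bool" where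
  wt_Arr: "(\<forall>x\<in>A. f x \<in> B) \<Longrightarrow> wt_rsf (Arr f) A B"
| wt_Comp: "wt_rsf t1 A B \<Longrightarrow> wt_rsf t2 B C \<Longrightarrow> wt_rsf (Comp t1 t2) A C"
| wt_First: "wt_rsf t A B \<Longrightarrow> wt_rsf (First t) (ProdT A C) (ProdT B C)"
| wt_Get: "wt_rsf (Get (Ref R n)) A (ProdT A R)"
| wt_Set: "wt_rsf (Set (Ref R n)) (ProdT A R) A"

datatype status = Internal | Input bool | Output bool

text \<open>\<open>Cell s \<tau> None\<close> is the undefined content \<open>undef\<close>.\<close>
datatype 'a cell = Cell status "'a ty" "'a val option"

type_synonym 'a mem = "nat \<Rightarrow> 'a cell option"

fun mread :: "'a resource \<Rightarrow> 'a mem \<Rightarrow> ('a val \<times> 'a mem) option" where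
  "mread (Ref A n) \<sigma> =
     (case \<sigma> n of
        None \<Rightarrow> None
      | Some (Cell s B x) \<Rightarrow>
          if B = A \<and> s = Internal \<and> x \<noteq> None then Some (the x, \<sigma>)
          else if B = A \<and> s = Input True \<and> x \<noteq> None
            then Some (the x, \<sigma>(n \<mapsto> Cell (Input False) A None))
          else None)"

fun mwrite :: "'a resource \<Rightarrow> 'a mem \<Rightarrow> 'a val \<Rightarrow> 'a mem option" where
  "mwrite (Ref A n) \<sigma> v =
     (case \<sigma> n of
        None \<Rightarrow> None
      | Some (Cell s B x) \<Rightarrow>
          if B = A \<and> s = Internal then Some (\<sigma>(n \<mapsto> Cell Internal A (Some v)))
          else if B = A \<and> s = Output True \<and> x = None
            then Some (\<sigma>(n \<mapsto> Cell (Output False) A (Some v)))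
          else None)"

fun step :: "'a rsf \<Rightarrow> 'a val \<Rightarrow> 'a mem \<Rightarrow> ('a val \<times> 'a mem) option" where
  "step (Arr f) x \<sigma> = Some (f x, \<sigma>)"
| "step (Comp t1 t2) x \<sigma> =
     (case step t1 x \<sigma> of None \<Rightarrow> None | Some (y, \<sigma>') \<Rightarrow> step t2 y \<sigma>')"
| "step (First t) (VPair x c) \<sigma> =
     (case step t x \<sigma> of None \<Rightarrow> None | Some (y, \<sigma>') \<Rightarrow> Some (VPair y c, \<sigma>'))"
| "step (First t) VUnit \<sigma> = None"
| "step (First t) (VAtom a) \<sigma> = None"
| "step (Get r) x \<sigma> =
     (case mread r \<sigma> of None \<Rightarrow> None | Some (y, \<sigma>') \<Rightarrow> Some (VPair x y, \<sigma>'))"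
| "step (Set r) (VPair x y) \<sigma> = map_option (\<lambda>\<sigma>'. (x, \<sigma>')) (mwrite r \<sigma> y)"
| "step (Set r) VUnit \<sigma> = None"
| "step (Set r) (VAtom a) \<sigma> = None"

record 'a prog =
  inputs :: "'a ty list"
  internals :: "('a ty \<times> 'a val) list"
  outputs :: "'a ty list"
  program :: "'a rsf"

definition prog_ok :: "'a prog \<Rightarrow> bool" where
  "prog_ok p \<longleftrightarrow> wt_rsf (program p) UnitT UnitT \<and> (\<forall>(\<tau>, v) \<in> set (internals p). v \<in> \<tau>)"

definition init :: "'a prog \<Rightarrow> 'a mem" where
  "init p n =
     (let kin = length (inputs p); k = length (internals p) in
      if kin \<le> n \<and> n < kin + k
      then Some (Cell Internal (fst (internals p ! (n - kin))) (Some (snd (internals p ! (n - kin)))))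
      else None)"

definition pull :: "'a prog \<Rightarrow> 'a mem \<Rightarrow> 'a val list \<Rightarrow> 'a mem" where
  "pull p \<sigma> i n =
     (let kin = length (inputs p); k = length (internals p); kout = length (outputs p) in
      if n < kin then Some (Cell (Input True) (inputs p ! n) (Some (i ! n)))
      else if kin + k \<le> n \<and> n < kin + k + kout
      then Some (Cell (Output True) (outputs p ! (n - kin - k)) None)
      else \<sigma> n)"

definition push :: "'a prog \<Rightarrow> 'a mem \<Rightarrow> 'a val list" where
  "push p \<sigma> =
     (let kin = length (inputs p); k = length (internals p); kout = length (outputs p) in
      concat (map (\<lambda>n. case \<sigma> n of
                          Some (Cell s \<tau> (Some v)) \<Rightarrow> if s = Output False then [v] else []
                        | _ \<Rightarrow> [])
                  [kin + k ..< kin + k + kout]))"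

text \<open>Streams are modelled as functions \<open>nat \<Rightarrow> _\<close>. \<open>run_state p \<sigma> ins j\<close> is the
  memory after the first \<open>j\<close> reactions (\<open>None\<close> = undefined); \<open>run p \<sigma> ins j\<close> is the
  \<open>j\<close>-th element of the (partial) stream \<open>run p \<sigma> ins\<close>.\<close>
fun run_state :: "'a prog \<Rightarrow> 'a mem \<Rightarrow> (nat \<Rightarrow> 'a val list) \<Rightarrow> nat \<Rightarrow> 'a mem option" where
  "run_state p \<sigma> ins 0 = Some \<sigma>"
| "run_state p \<sigma> ins (Suc j) =
     (case run_state p \<sigma> ins j of
        None \<Rightarrow> None
      | Some \<sigma>0 \<Rightarrow>
          (case step (program p) VUnit (pull p \<sigma>0 (ins j)) of
             None \<Rightarrow> None
           | Some (r, \<sigma>') \<Rightarrow> if r = VUnit then Some \<sigma>' else None))"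

definition run :: "'a prog \<Rightarrow> 'a mem \<Rightarrow> (nat \<Rightarrow> 'a val list) \<Rightarrow> nat \<Rightarrow> 'a val list option" where
  "run p \<sigma> ins j = map_option (push p) (run_state p \<sigma> ins (Suc j))"

type_synonym 'a amem = "nat \<Rightarrow> (status \<times> 'a ty) option"

fun mread_abs :: "'a resource \<Rightarrow> 'a amem \<Rightarrow> 'a amem option" where
  "mread_abs (Ref A n) \<Sigma> =
     (if \<Sigma> n = Some (Internal, A) then Some \<Sigma>
      else if \<Sigma> n = Some (Input True, A) then Some (\<Sigma>(n \<mapsto> (Input False, A)))
      else None)"

fun mwrite_abs :: "'a resource \<Rightarrow> 'a amem \<Rightarrow> 'a amem option" where
  "mwrite_abs (Ref A n) \<Sigma> =
     (if \<Sigma> n = Some (Internal, A) then Some \<Sigma>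
      else if \<Sigma> n = Some (Output True, A) then Some (\<Sigma>(n \<mapsto> (Output False, A)))
      else None)"

fun step_abs :: "'a rsf \<Rightarrow> 'a amem \<Rightarrow> 'a amem option" where
  "step_abs (Arr f) \<Sigma> = Some \<Sigma>"
| "step_abs (First t) \<Sigma> = step_abs t \<Sigma>"
| "step_abs (Comp t1 t2) \<Sigma> = Option.bind (step_abs t1 \<Sigma>) (step_abs t2)"
| "step_abs (Get r) \<Sigma> = mread_abs r \<Sigma>"
| "step_abs (Set r) \<Sigma> = mwrite_abs r \<Sigma>"

definition init_abs :: "'a prog \<Rightarrow> 'a amem" where
  "init_abs p n =
     (let kin = length (inputs p); k = length (internals p); kout = length (outputs p) in
      if n < kin then Some (Input True, inputs p ! n)
      else if n < kin + k then Some (Internal, fst (internals p ! (n - kin)))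
      else if n < kin + k + kout then Some (Output True, outputs p ! (n - kin - k))
      else None)"

definition well_typed :: "'a prog \<Rightarrow> bool" where
  "well_typed p \<longleftrightarrow>
     (\<exists>\<Sigma>. step_abs (program p) (init_abs p) = Some \<Sigma> \<and>
        (\<forall>n < length (inputs p). \<exists>\<tau>. \<Sigma> n = Some (Input False, \<tau>)) \<and>
        (\<forall>n. length (inputs p) + length (internals p) \<le> n \<and>
             n < length (inputs p) + length (internals p) + length (outputs p) \<longrightarrow>
             (\<exists>\<tau>. \<Sigma> n = Some (Output False, \<tau>))))"

definition compatible :: "'a val list \<Rightarrow> 'a ty list \<Rightarrow> bool" where
  "compatible vs ts \<longleftrightarrow> list_all2 (\<lambda>v \<tau>. v \<in> \<tau>) vs ts"

end

theory Submission
  imports Defs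
begin

text \<open>A simulation argument: an abstract memory \<open>\<Sigma>\<close> abstracts a memory \<open>\<sigma>\<close> if every
  cell carries the status and type recorded in \<open>\<Sigma>\<close> and a content fitting that status (a
  value of the type, except for spent inputs and unwritten outputs). Whenever \<open>step\<^sup>\<dagger> t \<Sigma>\<close> is
  defined, \<open>step t x \<sigma>\<close> is defined for well-typed \<open>x\<close>, with a well-typed result and a
  post-memory abstracted by \<open>step\<^sup>\<dagger> t \<Sigma>\<close>. Since \<open>step\<^sup>\<dagger>\<close> never changes types nor internal
  statuses, every reaction keeps internal cells filled with well-typed values, so the next
  pulled memory is again abstracted by \<open>init\<^sup>\<dagger> p\<close>; and well-typedness forces every output cell
  to be written with a value of its type.\<close>

fun cell_content_ok :: "status \<Rightarrow> 'a ty \<Rightarrow> 'a val option \<Rightarrow> bool" where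
  "cell_content_ok Internal \<tau> x \<longleftrightarrow> (\<exists>v. x = Some v \<and> v \<in> \<tau>)"
| "cell_content_ok (Input b) \<tau> x \<longleftrightarrow> (b \<longrightarrow> (\<exists>v. x = Some v \<and> v \<in> \<tau>))"
| "cell_content_ok (Output b) \<tau> x \<longleftrightarrow> (if b then x = None else \<exists>v. x = Some v \<and> v \<in> \<tau>)"

definition abstracts :: "'a amem \<Rightarrow> 'a mem \<Rightarrow> bool" where
  "abstracts \<Sigma> \<sigma> \<longleftrightarrow> (\<forall>n. case \<Sigma> n of
       None \<Rightarrow> \<sigma> n = None
     | Some (s, \<tau>) \<Rightarrow> (\<exists>x. \<sigma> n = Some (Cell s \<tau> x) \<and> cell_content_ok s \<tau> x))"

lemma abstractsD:
  assumes "abstracts \<Sigma> \<sigma>" "\<Sigma> n = Some (s, \<tau>)"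
  shows "\<exists>x. \<sigma> n = Some (Cell s \<tau> x) \<and> cell_content_ok s \<tau> x"
  using spec[OF assms(1)[unfolded abstracts_def], of n] assms(2) by simp

lemma abstracts_NoneD: "abstracts \<Sigma> \<sigma> \<Longrightarrow> \<Sigma> n = None \<Longrightarrow> \<sigma> n = None"
  unfolding abstracts_def by (drule spec[of _ n]) simp

lemma abstracts_upd:
  assumes "abstracts \<Sigma> \<sigma>" "cell_content_ok s \<tau> x"
  shows "abstracts (\<Sigma>(n \<mapsto> (s, \<tau>))) (\<sigma>(n \<mapsto> Cell s \<tau> x))"
  unfolding abstracts_def
proof
  fix m
  show "case (\<Sigma>(n \<mapsto> (s, \<tau>))) m of None \<Rightarrow> (\<sigma>(n \<mapsto> Cell s \<tau> x)) m = None
      | Some (s', \<tau>') \<Rightarrow> \<exists>x'. (\<sigma>(n \<mapsto> Cell s \<tau> x)) m = Some (Cell s' \<tau>' x') \<and> cell_content_ok s' \<tau>' x'"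
    using spec[OF assms(1)[unfolded abstracts_def], of m] assms(2)
    by (cases "m = n"; cases "\<Sigma> m") auto
qed

lemma mread_sound:
  assumes "abstracts \<Sigma> \<sigma>" "mread_abs (Ref R n) \<Sigma> = Some \<Sigma>'"
  shows "\<exists>y \<sigma>'. mread (Ref R n) \<sigma> = Some (y, \<sigma>') \<and> y \<in> R \<and> abstracts \<Sigma>' \<sigma>'"
proof (cases "\<Sigma> n = Some (Internal, R)")
  case True
  from abstractsD[OF assms(1) True] obtain v where "\<sigma> n = Some (Cell Internal R (Some v))" "v \<in> R"
    by auto
  with True assms show ?thesis by simp
next
  case False
  with assms(2) have \<Sigma>n: "\<Sigma> n = Some (Input True, R)" and \<Sigma>': "\<Sigma>' = \<Sigma>(n \<mapsto> (Input False, R))"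
    by (auto split: if_splits)
  from abstractsD[OF assms(1) \<Sigma>n] obtain v where "\<sigma> n = Some (Cell (Input True) R (Some v))" "v \<in> R"
    by auto
  with \<Sigma>' abstracts_upd[OF assms(1), of "Input False" R None n] show ?thesis by simp
qed

lemma mwrite_sound:
  assumes "abstracts \<Sigma> \<sigma>" "mwrite_abs (Ref R n) \<Sigma> = Some \<Sigma>'" "v \<in> R"
  shows "\<exists>\<sigma>'. mwrite (Ref R n) \<sigma> v = Some \<sigma>' \<and> abstracts \<Sigma>' \<sigma>'"
proof (cases "\<Sigma> n = Some (Internal, R)")
  case True
  from abstractsD[OF assms(1) True] obtain w where "\<sigma> n = Some (Cell Internal R (Some w))"
    by auto
  with True assms abstracts_upd[OF assms(1), of Internal R "Some v" n] show ?thesis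
    by (simp add: fun_upd_idem)
next
  case False
  with assms(2) have \<Sigma>n: "\<Sigma> n = Some (Output True, R)" and \<Sigma>': "\<Sigma>' = \<Sigma>(n \<mapsto> (Output False, R))"
    by (auto split: if_splits)
  from abstractsD[OF assms(1) \<Sigma>n] have "\<sigma> n = Some (Cell (Output True) R None)" by auto
  with \<Sigma>' assms(3) abstracts_upd[OF assms(1), of "Output False" R "Some v" n] show ?thesis by simp
qed

theorem step_sound:
  assumes "wt_rsf t A B" "x \<in> A" "abstracts \<Sigma> \<sigma>" "step_abs t \<Sigma> = Some \<Sigma>'"
  shows "\<exists>y \<sigma>'. step t x \<sigma> = Some (y, \<sigma>') \<and> y \<in> B \<and> abstracts \<Sigma>' \<sigma>'"
  using assms
proof (induction t A B arbitrary: x \<Sigma> \<sigma> \<Sigma>' rule: wt_rsf.induct)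
  case (wt_Arr A f B)
  then show ?case by auto
next
  case (wt_Comp t1 A B t2 C)
  then obtain \<Sigma>1 where \<Sigma>1: "step_abs t1 \<Sigma> = Some \<Sigma>1" "step_abs t2 \<Sigma>1 = Some \<Sigma>'"
    by (cases "step_abs t1 \<Sigma>") auto
  from wt_Comp.IH(1)[OF wt_Comp.prems(1,2) \<Sigma>1(1)] obtain y \<sigma>1
    where "step t1 x \<sigma> = Some (y, \<sigma>1)" "y \<in> B" "abstracts \<Sigma>1 \<sigma>1"
    by blast
  with wt_Comp.IH(2)[OF _ _ \<Sigma>1(2)] show ?case by auto
next
  case (wt_First t A B C)
  then obtain a c where x: "x = VPair a c" "a \<in> A" "c \<in> C"
    by (auto simp: ProdT_def)
  with wt_First.IH[OF x(2) wt_First.prems(2)] wt_First.prems(3) obtain y \<sigma>'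
    where "step t a \<sigma> = Some (y, \<sigma>')" "y \<in> B" "abstracts \<Sigma>' \<sigma>'"
    by auto
  with x show ?case by (auto simp: ProdT_def)
next
  case (wt_Get R n A)
  with mread_sound[of \<Sigma> \<sigma> R n \<Sigma>'] obtain y \<sigma>'
    where "mread (Ref R n) \<sigma> = Some (y, \<sigma>')" "y \<in> R" "abstracts \<Sigma>' \<sigma>'"
    by auto
  with wt_Get.prems(1) show ?case by (auto simp: ProdT_def)
next
  case (wt_Set R n A)
  then obtain a b where x: "x = VPair a b" "a \<in> A" "b \<in> R"
    by (auto simp: ProdT_def)
  with wt_Set.prems mwrite_sound[of \<Sigma> \<sigma> R n \<Sigma>' b] show ?case by auto
qed

lemma step_abs_preserves_types:
  "step_abs t \<Sigma> = Some \<Sigma>' \<Longrightarrow> map_option snd (\<Sigma>' n) = map_option snd (\<Sigma> n)"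
proof (induction t arbitrary: \<Sigma> \<Sigma>')
  case (Comp t1 t2)
  then show ?case by (cases "step_abs t1 \<Sigma>") auto
next
  case (Get r)
  then show ?case by (cases r) (auto split: if_splits)
next
  case (Set r)
  then show ?case by (cases r) (auto split: if_splits)
qed auto

lemma step_abs_preserves_Internal:
  "step_abs t \<Sigma> = Some \<Sigma>' \<Longrightarrow> \<Sigma> n = Some (Internal, \<tau>) \<Longrightarrow> \<Sigma>' n = Some (Internal, \<tau>)"
proof (induction t arbitrary: \<Sigma> \<Sigma>')
  case (Comp t1 t2)
  then show ?case by (cases "step_abs t1 \<Sigma>") auto
next
  case (Get r)
  then show ?case by (cases r) (auto split: if_splits)
next
  case (Set r)
  then show ?case by (cases r) (auto split: if_splits)
qed auto

text \<open>The invariant between reactions; input and output cells are unconstrained because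
  \<open>pull\<close> overwrites them.\<close>

definition resting_mem :: "'a prog \<Rightarrow> 'a mem \<Rightarrow> bool" where
  "resting_mem p \<sigma> \<longleftrightarrow>
     (let kin = length (inputs p); k = length (internals p); kout = length (outputs p) in
      (\<forall>n. kin \<le> n \<and> n < kin + k \<longrightarrow>
         (\<exists>v. \<sigma> n = Some (Cell Internal (fst (internals p ! (n - kin))) (Some v))
              \<and> v \<in> fst (internals p ! (n - kin)))) \<and>
      (\<forall>n. kin + k + kout \<le> n \<longrightarrow> \<sigma> n = None))"

lemma resting_mem_init:
  assumes "prog_ok p"
  shows "resting_mem p (init p)"
proof -
  have "snd (internals p ! (n - kin)) \<in> fst (internals p ! (n - kin))"
    if "kin \<le> n" "n < kin + length (internals p)" for n kin
    using assms that nth_mem[of "n - kin" "internals p"] unfolding prog_ok_def by fastforce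
  then show ?thesis
    unfolding resting_mem_def init_def Let_def by simp
qed

lemma abstracts_pull:
  assumes "resting_mem p \<sigma>" "compatible i (inputs p)"
  shows "abstracts (init_abs p) (pull p \<sigma> i)"
proof -
  have "length i = length (inputs p)" "\<And>m. m < length i \<Longrightarrow> i ! m \<in> inputs p ! m"
    using assms(2) unfolding compatible_def list_all2_conv_all_nth by auto
  with assms(1) show ?thesis
    unfolding abstracts_def resting_mem_def init_abs_def pull_def Let_def
    by (auto simp: not_less)
qed

lemma resting_mem_after_step:
  assumes "step_abs (program p) (init_abs p) = Some \<Sigma>" "abstracts \<Sigma> \<sigma>"
  shows "resting_mem p \<sigma>"
proof -
  let ?kin = "length (inputs p)" and ?k = "length (internals p)"
  have internal: "\<Sigma> n = Some (Internal, fst (internals p ! (n - ?kin)))"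
    if "?kin \<le> n" "n < ?kin + ?k" for n
    using that step_abs_preserves_Internal[OF assms(1)] by (simp add: init_abs_def)
  have unallocated: "\<Sigma> n = None" if "?kin + ?k + length (outputs p) \<le> n" for n
    using that step_abs_preserves_types[OF assms(1), of n] by (simp add: init_abs_def)
  show ?thesis
    unfolding resting_mem_def Let_def
  proof (intro conjI allI impI)
    fix n assume "?kin \<le> n \<and> n < ?kin + ?k"
    with abstractsD[OF assms(2) internal]
    show "\<exists>v. \<sigma> n = Some (Cell Internal (fst (internals p ! (n - ?kin))) (Some v))
            \<and> v \<in> fst (internals p ! (n - ?kin))"
      by auto
  next
    fix n assume "?kin + ?k + length (outputs p) \<le> n"
    with abstracts_NoneD[OF assms(2) unallocated] show "\<sigma> n = None" by blast
  qed
qed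

lemma compatible_push:
  assumes "\<And>m. m < length (outputs p) \<Longrightarrow>
    \<exists>v. \<sigma> (length (inputs p) + length (internals p) + m)
          = Some (Cell (Output False) (outputs p ! m) (Some v)) \<and> v \<in> outputs p ! m"
  shows "compatible (push p \<sigma>) (outputs p)"
proof -
  let ?kk = "length (inputs p) + length (internals p)" and ?kout = "length (outputs p)"
  obtain v where v: "\<And>m. m < ?kout \<Longrightarrow>
      \<sigma> (?kk + m) = Some (Cell (Output False) (outputs p ! m) (Some (v m))) \<and> v m \<in> outputs p ! m"
    using assms by metis
  have shift: "[?kk..<?kk + ?kout] = map (\<lambda>m. ?kk + m) [0..<?kout]"
    using map_add_upt[of ?kk ?kout] by (simp add: add.commute)
  have "push p \<sigma> = concat (map (\<lambda>m. [v m]) [0..<?kout])"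
    unfolding push_def Let_def shift map_map
    by (intro arg_cong[where f = concat] map_cong) (auto simp: v)
  then have "push p \<sigma> = map v [0..<?kout]" by simp
  with v show ?thesis
    unfolding compatible_def list_all2_conv_all_nth by simp
qed

lemma outputs_written:
  assumes "well_typed p" "step_abs (program p) (init_abs p) = Some \<Sigma>" "abstracts \<Sigma> \<sigma>"
    and "m < length (outputs p)"
  shows "\<exists>v. \<sigma> (length (inputs p) + length (internals p) + m)
               = Some (Cell (Output False) (outputs p ! m) (Some v)) \<and> v \<in> outputs p ! m"
proof -
  let ?n = "length (inputs p) + length (internals p) + m"
  from assms(1,2,4) obtain \<tau> where "\<Sigma> ?n = Some (Output False, \<tau>)"
    unfolding well_typed_def by fastforce
  moreover have "map_option snd (\<Sigma> ?n) = Some (outputs p ! m)"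
    using step_abs_preserves_types[OF assms(2), of ?n] assms(4) by (simp add: init_abs_def)
  ultimately have "\<Sigma> ?n = Some (Output False, outputs p ! m)" by simp
  from abstractsD[OF assms(3) this] show ?thesis by auto
qed

theorem reaction_sound:
  assumes "prog_ok p" "well_typed p" "resting_mem p \<sigma>" "compatible i (inputs p)"
  shows "\<exists>\<sigma>'. step (program p) VUnit (pull p \<sigma> i) = Some (VUnit, \<sigma>')
                \<and> resting_mem p \<sigma>' \<and> compatible (push p \<sigma>') (outputs p)"
proof -
  from assms(2) obtain \<Sigma> where \<Sigma>: "step_abs (program p) (init_abs p) = Some \<Sigma>"
    unfolding well_typed_def by blast
  from assms(1) have "wt_rsf (program p) UnitT UnitT"
    unfolding prog_ok_def by simp
  from step_sound[OF this _ abstracts_pull[OF assms(3,4)] \<Sigma>]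
  obtain \<sigma>' where "step (program p) VUnit (pull p \<sigma> i) = Some (VUnit, \<sigma>')" "abstracts \<Sigma> \<sigma>'"
    by (auto simp: UnitT_def)
  with \<Sigma> assms(2) show ?thesis
    by (metis resting_mem_after_step compatible_push outputs_written)
qed

lemma run_state_resting:
  assumes "prog_ok p" "well_typed p" "\<forall>j. compatible (ins j) (inputs p)"
  shows "\<exists>\<sigma>. run_state p (init p) ins j = Some \<sigma> \<and> resting_mem p \<sigma>"
proof (induction j)
  case 0
  show ?case using resting_mem_init[OF assms(1)] by simp
next
  case (Suc j)
  then obtain \<sigma> where "run_state p (init p) ins j = Some \<sigma>" "resting_mem p \<sigma>" by blast
  with reaction_sound[OF assms(1,2)] assms(3) obtain \<sigma>'
    where "step (program p) VUnit (pull p \<sigma> (ins j)) = Some (VUnit, \<sigma>')" "resting_mem p \<sigma>'"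
    by blast
  with \<open>run_state p (init p) ins j = Some \<sigma>\<close> show ?case by simp
qed

theorem corollary1:
  fixes p :: "'a prog" and ins :: "nat \<Rightarrow> 'a val list"
  assumes "prog_ok p"
    and "well_typed p"
    and "\<forall>j. compatible (ins j) (inputs p)"
  shows "\<forall>j. \<exists>os. run p (init p) ins j = Some os \<and> compatible os (outputs p)"
proof
  fix j
  obtain \<sigma> where \<sigma>: "run_state p (init p) ins j = Some \<sigma>" "resting_mem p \<sigma>"
    using run_state_resting[OF assms] by blast
  with reaction_sound[OF assms(1,2)] assms(3) obtain \<sigma>' where
    "step (program p) VUnit (pull p \<sigma> (ins j)) = Some (VUnit, \<sigma>')"
    "compatible (push p \<sigma>') (outputs p)"
    by blast
  with \<sigma>(1) show "\<exists>os. run p (init p) ins j = Some os \<and> compatible os (outputs p)"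
    unfolding run_def by simp
qed

end
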